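(* Let $f_1,\dots,f_T\in\mathbb R$ be piecewise constant with change points $0=\eta_0<\eta_1<\dots<\eta_{K+1}=T$, i.e. $f$ is constant on $\{\eta_k+1,\dots,\eta_{k+1}\}$ for each $k$, and let $\kappa_r=|f_{\eta_r+1}-f_{\eta_r}|$. Let $0\le s<e\le T$ be integers such that $\eta_{r-1}\le s<\eta_r<\eta_{r+1}\le\dots\le\eta_{r+q}\le e\le\eta_{r+q+1}$ for some $q\ge1$, with $\eta_{r+1}<e$. If $\eta_r-s\le c_1^2\Delta$ for some $c_1\le1/4$ and $\eta_{r+1}-\eta_r\ge\Delta$, then \[ |\widetilde f^{s,e}_{\eta_r}|\le c_1|\widetilde f^{s,e}_{\eta_{r+1}}|+2\kappa_r\sqrt{\eta_r-s}, \] where for $s<t<e$, \[ \widetilde f^{s,e}_t=\sqrt{\frac{e-t}{(e-s)(t-s)}}\sum_{i=s+1}^tf_i-\sqrt{\frac{t-s}{(e-s)(e-t)}}\sum_{i=t+1}^ef_i. \] *)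

theory Defs
  imports Complex_Main
begin

definition cusum :: "(nat \<Rightarrow> real) \<Rightarrow> nat \<Rightarrow> nat \<Rightarrow> nat \<Rightarrow> real" where
  "cusum f s e t =
     sqrt ((real e - real t) / ((real e - real s) * (real t - real s))) * (\<Sum>i=s+1..t. f i)
   - sqrt ((real t - real s) / ((real e - real s) * (real e - real t))) * (\<Sum>i=t+1..e. f i)"

end

theory Submission
  imports Defs
begin

text \<open>Write \<open>n = e - s\<close>, \<open>a = \<eta>\<^sub>r - s\<close>, \<open>b = \<eta>\<^sub>r\<^sub>+\<^sub>1 - \<eta>\<^sub>r\<close> and let \<open>m\<close> be the mean of \<open>f\<close>
  on \<open>(s, e]\<close>. Centering the partial sums at \<open>m\<close>, the CUSUM at \<open>\<eta>\<^sub>r\<close> is \<open>a x w(a)\<close> and the one at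
  \<open>\<eta>\<^sub>r\<^sub>+\<^sub>1\<close> is \<open>(a + b)(x - x\<^sub>0) w(a + b)\<close>, where \<open>w(u) = sqrt (n / (u (n - u)))\<close>,
  \<open>x = f(\<eta>\<^sub>r) - m\<close> and \<open>x\<^sub>0 = b (f(\<eta>\<^sub>r) - f(\<eta>\<^sub>r + 1)) / (a + b)\<close>. Split \<open>x = (x - x\<^sub>0) + x\<^sub>0\<close>:
  because \<open>a \<le> c\<^sub>1\<^sup>2 b\<close> the factor \<open>a w(a)\<close> is at most \<open>c\<^sub>1 (a + b) w(a + b)\<close>, and since
  \<open>2a \<le> n\<close> it is at most \<open>2 sqrt a\<close>, while \<open>|x\<^sub>0| \<le> \<kappa>\<^sub>r\<close>.\<close>

definition cusum_weight :: "real \<Rightarrow> real \<Rightarrow> real" where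
  "cusum_weight n u = sqrt (n / (u * (n - u)))"

lemma cusum_eq_centered:
  assumes "s < t" "t < e"
  shows "cusum f s e t =
           ((\<Sum>i=s+1..t. f i) - (real t - real s) / (real e - real s) * (\<Sum>i=s+1..e. f i))
           * cusum_weight (real e - real s) (real t - real s)"
proof -
  define n where "n = real e - real s"
  define u where "u = real t - real s"
  define v where "v = real e - real t"
  define W where "W = cusum_weight n u"
  have pos: "n > 0" "u > 0" "v > 0" and n_eq: "n = u + v"
    using assms unfolding n_def u_def v_def by auto
  then have "v = n - u" by simp
  have W_eq: "W = sqrt (n / (u * v))"
    unfolding W_def cusum_weight_def using n_eq by simp
  have scale: "sqrt (c\<^sup>2 * (n / (u * v))) = c * W" if "0 \<le> c" for c
    unfolding W_eq using that by (subst real_sqrt_mult) simp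
  have "v / (n * u) = (v / n)\<^sup>2 * (n / (u * v))" "u / (n * v) = (u / n)\<^sup>2 * (n / (u * v))"
    using pos by (simp_all add: field_simps power2_eq_square)
  then have sqrt_v: "sqrt (v / (n * u)) = v / n * W" and sqrt_u: "sqrt (u / (n * v)) = u / n * W"
    using pos scale by simp_all
  have total: "(\<Sum>i=s+1..e. f i) = (\<Sum>i=s+1..t. f i) + (\<Sum>i=t+1..e. f i)"
    using assms sum.ub_add_nat[of "s + 1" t f "e - t"] by simp
  have "cusum f s e t = sqrt (v / (n * u)) * (\<Sum>i=s+1..t. f i) - sqrt (u / (n * v)) * (\<Sum>i=t+1..e. f i)"
    unfolding cusum_def n_def u_def v_def by simp
  also have "\<dots> = ((\<Sum>i=s+1..t. f i) - u / n * (\<Sum>i=s+1..e. f i)) * W"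
    unfolding sqrt_v sqrt_u total unfolding \<open>v = n - u\<close> using pos by (simp add: field_simps)
  finally show ?thesis unfolding W_def n_def u_def .
qed

lemma cusum_weight_nonneg:
  assumes "0 \<le> u" "u \<le> n"
  shows "0 \<le> cusum_weight n u"
  using assms unfolding cusum_weight_def by simp

lemma mult_cusum_weight:
  assumes "0 < u" "u < n"
  shows "u * cusum_weight n u = sqrt (u * n / (n - u))"
proof -
  have "u * n / (n - u) = u\<^sup>2 * (n / (u * (n - u)))"
    using assms by (simp add: field_simps power2_eq_square)
  then have "sqrt (u * n / (n - u)) = sqrt (u\<^sup>2) * sqrt (n / (u * (n - u)))"
    by (simp only: real_sqrt_mult)
  then show ?thesis
    unfolding cusum_weight_def using assms by simp
qed

lemma mult_cusum_weight_le_sqrt: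
  assumes "0 < u" "2 * u \<le> n"
  shows "u * cusum_weight n u \<le> sqrt (2 * u)"
proof -
  have "u * n / (n - u) \<le> 2 * u"
    using assms by (simp add: field_simps)
  then show ?thesis
    using assms by (simp add: mult_cusum_weight)
qed

lemma mult_cusum_weight_le_add:
  assumes "0 < a" "0 < c" "a \<le> c\<^sup>2 * b" "a + b < n"
  shows "a * cusum_weight n a \<le> c * ((a + b) * cusum_weight n (a + b))"
proof -
  have "0 < c\<^sup>2 * b" using assms by linarith
  then have b: "0 < b" using assms by (simp add: zero_less_mult_iff)
  have "a * n / (n - a) \<le> a * n / (n - (a + b))"
    using assms b by (intro divide_left_mono) (auto intro: mult_pos_pos)
  also have "\<dots> \<le> c\<^sup>2 * ((a + b) * n / (n - (a + b)))"
  proof -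
    have "0 \<le> c\<^sup>2 * a" using assms by simp
    then have "a \<le> c\<^sup>2 * (a + b)" unfolding distrib_left using assms by linarith
    then show ?thesis
      using assms b by (simp add: divide_right_mono mult_right_mono mult.assoc)
  qed
  finally have "sqrt (a * n / (n - a)) \<le> sqrt (c\<^sup>2) * sqrt ((a + b) * n / (n - (a + b)))"
    by (metis real_sqrt_le_mono real_sqrt_mult)
  then show ?thesis
    using assms b by (simp add: mult_cusum_weight)
qed

lemma two_level_cusum_ineq:
  fixes a b c n x d :: real
  assumes a: "0 < a" and c: "0 < c" "c \<le> 1" and ab: "a \<le> c\<^sup>2 * b" and n: "a + b < n"
  shows "\<bar>a * x\<bar> * cusum_weight n a
           \<le> c * \<bar>a * x + b * (x - d)\<bar> * cusum_weight n (a + b) + 2 * \<bar>d\<bar> * sqrt a"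
proof -
  define A where "A = a * cusum_weight n a"
  define x0 where "x0 = b * d / (a + b)"
  have "0 < c\<^sup>2 * b" using a ab by linarith
  then have "0 < b" by (simp add: zero_less_mult_iff)
  moreover have "c\<^sup>2 \<le> 1" using c by (simp add: power_le_one)
  ultimately have "c\<^sup>2 * b \<le> b" by (simp add: mult_left_le_one_le)
  then have "a \<le> b" using ab by linarith
  have A_nonneg: "0 \<le> A" using a n \<open>0 < b\<close> unfolding A_def by (simp add: mult_cusum_weight)
  have A_le_add: "A \<le> c * (a + b) * cusum_weight n (a + b)"
    unfolding A_def using mult_cusum_weight_le_add[OF a c(1) ab n] by (simp add: mult.assoc)
  have "A \<le> sqrt (2 * a)"
    unfolding A_def using \<open>a \<le> b\<close> a n by (intro mult_cusum_weight_le_sqrt) auto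
  also have "\<dots> \<le> sqrt (4 * a)" using a by simp
  also have "\<dots> = 2 * sqrt a" by (simp add: real_sqrt_mult)
  finally have A_small: "A \<le> 2 * sqrt a" .
  have x0_le: "\<bar>x0\<bar> \<le> \<bar>d\<bar>"
    using a \<open>0 < b\<close> unfolding x0_def by (simp add: abs_mult field_simps mult_left_mono)
  have shift: "a * x + b * (x - d) = (a + b) * (x - x0)"
    unfolding x0_def using a \<open>0 < b\<close> by (simp add: field_simps)
  have "\<bar>a * x\<bar> * cusum_weight n a = A * \<bar>x\<bar>"
    unfolding A_def using a by (simp add: abs_mult)
  also have "\<dots> \<le> A * \<bar>x - x0\<bar> + A * \<bar>x0\<bar>"
    using A_nonneg abs_triangle_ineq[of "x - x0" x0] by (simp add: mult_left_mono flip: distrib_left)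
  also have "\<dots> \<le> c * (a + b) * cusum_weight n (a + b) * \<bar>x - x0\<bar> + 2 * sqrt a * \<bar>d\<bar>"
    using A_le_add A_small x0_le A_nonneg a by (intro add_mono mult_mono) auto
  also have "\<dots> = c * \<bar>a * x + b * (x - d)\<bar> * cusum_weight n (a + b) + 2 * \<bar>d\<bar> * sqrt a"
    unfolding shift using a \<open>0 < b\<close> by (simp add: abs_mult mult_ac)
  finally show ?thesis .
qed

lemma sum_constant_block:
  assumes "l \<le> h" "\<forall>i \<in> {l+1..h}. f i = (\<mu> :: real)"
  shows "(\<Sum>i=l+1..h. f i) = (real h - real l) * \<mu>"
proof -
  have "(\<Sum>i=l+1..h. f i) = (\<Sum>i=l+1..h. \<mu>)" using assms by (intro sum.cong) auto
  then show ?thesis using assms by (simp add: of_nat_diff)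
qed

lemma cusum_two_levels_bound:
  fixes f :: "nat \<Rightarrow> real"
  assumes "s < p" "p < p1" "p1 < e"
    and lower: "\<forall>i \<in> {s+1..p}. f i = \<mu>\<^sub>0" and upper: "\<forall>i \<in> {p+1..p1}. f i = \<mu>\<^sub>1"
    and c: "0 < c" "c \<le> 1" and close: "real p - real s \<le> c\<^sup>2 * (real p1 - real p)"
  shows "\<bar>cusum f s e p\<bar> \<le> c * \<bar>cusum f s e p1\<bar> + 2 * \<bar>\<mu>\<^sub>1 - \<mu>\<^sub>0\<bar> * sqrt (real p - real s)"
proof -
  define a where "a = real p - real s"
  define b where "b = real p1 - real p"
  define n where "n = real e - real s"
  define m where "m = (\<Sum>i=s+1..e. f i) / n"
  have a: "0 < a" and b_pos: "0 < b" and n: "a + b < n" and b_eq: "real p1 - real s = a + b"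
    using assms unfolding a_def b_def n_def by auto
  have sum_p: "(\<Sum>i=s+1..p. f i) = a * \<mu>\<^sub>0"
    unfolding a_def using sum_constant_block[of s p f] assms by simp
  have "(\<Sum>i=s+1..p1. f i) = (\<Sum>i=s+1..p. f i) + (\<Sum>i=p+1..p1. f i)"
    using sum.ub_add_nat[of "s + 1" p f "p1 - p"] assms by simp
  also have "\<dots> = a * \<mu>\<^sub>0 + b * \<mu>\<^sub>1"
    unfolding sum_p b_def using sum_constant_block[of p p1 f] assms by simp
  finally have sum_p1: "(\<Sum>i=s+1..p1. f i) = a * \<mu>\<^sub>0 + b * \<mu>\<^sub>1" .
  have "cusum f s e p = (a * (\<mu>\<^sub>0 - m)) * cusum_weight n a"
    using cusum_eq_centered[of s p e f] assms sum_p
    unfolding a_def n_def m_def by (simp add: algebra_simps)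
  then have lhs: "\<bar>cusum f s e p\<bar> = \<bar>a * (\<mu>\<^sub>0 - m)\<bar> * cusum_weight n a"
    using a n b_pos by (simp add: abs_mult cusum_weight_nonneg)
  have "cusum f s e p1 = (a * (\<mu>\<^sub>0 - m) + b * ((\<mu>\<^sub>0 - m) - (\<mu>\<^sub>0 - \<mu>\<^sub>1))) * cusum_weight n (a + b)"
    using cusum_eq_centered[of s p1 e f] assms sum_p1 b_eq
    unfolding n_def m_def by (simp add: algebra_simps add_divide_distrib)
  then have rhs: "\<bar>cusum f s e p1\<bar>
      = \<bar>a * (\<mu>\<^sub>0 - m) + b * ((\<mu>\<^sub>0 - m) - (\<mu>\<^sub>0 - \<mu>\<^sub>1))\<bar> * cusum_weight n (a + b)"
    using a n b_pos by (simp add: abs_mult cusum_weight_nonneg)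
  have "a \<le> c\<^sup>2 * b" using close unfolding a_def b_def .
  from two_level_cusum_ineq[OF a c this n, of "\<mu>\<^sub>0 - m" "\<mu>\<^sub>0 - \<mu>\<^sub>1"]
  show ?thesis
    unfolding lhs rhs a_def by (simp add: abs_minus_commute mult.assoc)
qed

theorem lemma23:
  fixes f :: "nat \<Rightarrow> real" and \<eta> :: "nat \<Rightarrow> nat"
    and T K r q s e :: nat and c1 \<Delta> :: real
  assumes eta0: "\<eta> 0 = 0" and etaK: "\<eta> (K + 1) = T"
    and eta_mono: "\<forall>k \<le> K. \<eta> k < \<eta> (Suc k)"
    and piecewise_const: "\<forall>k \<le> K. \<forall>i \<in> {\<eta> k + 1 .. \<eta> (Suc k)}. \<forall>j \<in> {\<eta> k + 1 .. \<eta> (Suc k)}. f i = f j"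
    and change: "\<forall>k. 1 \<le> k \<and> k \<le> K \<longrightarrow> f (\<eta> k + 1) \<noteq> f (\<eta> k)"
    and r1: "1 \<le> r" and q1: "1 \<le> q" and rqK: "r + q + 1 \<le> K + 1"
    and se: "s < e" and eT: "e \<le> T"
    and s_lo: "\<eta> (r - 1) \<le> s" and s_hi: "s < \<eta> r"
    and e_lo: "\<eta> (r + q) \<le> e" and e_hi: "e \<le> \<eta> (r + q + 1)"
    and e_r1: "\<eta> (r + 1) < e"
    and c1_pos: "0 < c1" and c1_le: "c1 \<le> 1/4"
    and close: "real (\<eta> r - s) \<le> c1^2 * \<Delta>"
    and gap: "real (\<eta> (r + 1) - \<eta> r) \<ge> \<Delta>"
  shows "\<bar>cusum f s e (\<eta> r)\<bar>
           \<le> c1 * \<bar>cusum f s e (\<eta> (r + 1))\<bar>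
             + 2 * \<bar>f (\<eta> r + 1) - f (\<eta> r)\<bar> * sqrt (real (\<eta> r - s))"
proof -
  have rK: "r \<le> K" "r - 1 \<le> K" and r_pred: "Suc (r - 1) = r" using rqK q1 r1 by auto
  have step: "\<eta> r < \<eta> (r + 1)" using eta_mono rK by simp
  have block: "f i = f j" if "k \<le> K" "i \<in> {\<eta> k + 1..\<eta> (Suc k)}" "j \<in> {\<eta> k + 1..\<eta> (Suc k)}" for k i j
    using piecewise_const that by blast
  have lower: "\<forall>i \<in> {s+1..\<eta> r}. f i = f (\<eta> r)"
    using block[of "r - 1"] rK s_lo s_hi unfolding r_pred by simp
  have upper: "\<forall>i \<in> {\<eta> r+1..\<eta> (r + 1)}. f i = f (\<eta> r + 1)"
  proof
    fix i assume "i \<in> {\<eta> r+1..\<eta> (r + 1)}"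
    then show "f i = f (\<eta> r + 1)"
      using block[of r i "\<eta> r + 1"] rK step by simp
  qed
  have "c1\<^sup>2 * \<Delta> \<le> c1\<^sup>2 * real (\<eta> (r + 1) - \<eta> r)"
    using gap by (simp add: mult_left_mono)
  then have "real (\<eta> r) - real s \<le> c1\<^sup>2 * (real (\<eta> (r + 1)) - real (\<eta> r))"
    using close s_hi step by (simp add: of_nat_diff)
  from cusum_two_levels_bound[OF s_hi step e_r1 lower upper c1_pos _ this] c1_le s_hi
  show ?thesis by (simp add: of_nat_diff)
qed

end
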